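(* Let $\alpha,\beta>0$ and let $\lambda\in\mathbb{R}$, $a,b>0$. Let $X,Y$ be independent random variables with $X\sim \mathrm{GIG}(\lambda,a,b;\alpha,1)$ and $Y\sim\mathrm{GIG}(-\lambda,a,b;\beta,1)$, and set $(U,V)=H_{III,A}^{\alpha,\beta}(X,Y)$. Then $U$ and $V$ are independent, with $U\sim\mathrm{GIG}(-\lambda,a,b;\alpha,1)$ and $V\sim \mathrm{GIG}(\lambda,a,b;\beta,1)$.
   Context: $\mathbb{R}_+=(0,\infty)$. For $\alpha,\beta>0$ the map $H_{III,A}^{\alpha,\beta}:\mathbb{R}_+^2\to\mathbb{R}_+^2$ is $$H_{III,A}^{\alpha,\beta}(x,y)=\left(\frac{y}{\alpha}\,\frac{\alpha x+\beta y}{x+y},\ \frac{x}{\beta}\,\frac{\alpha x+\beta y}{x+y}\right).$$ For $p,q>0$, $\lambda\in\mathbb{R}$ and $a,b>0$, the generalized inverse Gaussian distribution $\mathrm{GIG}(\lambda,a,b;p,q)$ is the probability distribution on $\mathbb{R}_+$ with density proportional to $x^{\lambda-1}e^{-apx-bqx^{-1}}$, $x\in\mathbb{R}_+$. *)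

theory Defs
  imports "HOL-Probability.Probability"
begin

definition H_IIIA :: "real \<Rightarrow> real \<Rightarrow> real \<times> real \<Rightarrow> real \<times> real" where
  "H_IIIA \<alpha> \<beta> = (\<lambda>(x, y).
     ((y / \<alpha>) * ((\<alpha> * x + \<beta> * y) / (x + y)),
      (x / \<beta>) * ((\<alpha> * x + \<beta> * y) / (x + y))))"

definition gig_kernel :: "real \<Rightarrow> real \<Rightarrow> real \<Rightarrow> real \<Rightarrow> real \<Rightarrow> real \<Rightarrow> real" where
  "gig_kernel lam a b p q x =
     (if 0 < x then x powr (lam - 1) * exp (- a * p * x - b * q / x) else 0)"

definition gig_const :: "real \<Rightarrow> real \<Rightarrow> real \<Rightarrow> real \<Rightarrow> real \<Rightarrow> real" where
  "gig_const lam a b p q = (\<integral>x. gig_kernel lam a b p q x \<partial>lborel)"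

definition gig_density :: "real \<Rightarrow> real \<Rightarrow> real \<Rightarrow> real \<Rightarrow> real \<Rightarrow> real \<Rightarrow> ennreal" where
  "gig_density lam a b p q x = ennreal (gig_kernel lam a b p q x / gig_const lam a b p q)"

end

theory Submission
  imports Defs
begin

text \<open>
  Parametrise the source quadrant by \<open>s = \<alpha>x + \<beta>y\<close>, \<open>w = x/y\<close> and the target quadrant by
  \<open>s = \<alpha>u + \<beta>v\<close>, \<open>w = \<beta>v/(\<alpha>u)\<close>. \<open>H_IIIA\<close> preserves both \<open>s\<close> and \<open>w\<close>, so comparing the
  Jacobians of the two parametrisations gives the Jacobian \<open>(\<alpha>x + \<beta>y)\<^sup>2 / (\<alpha>\<beta>(x + y)\<^sup>2)\<close> of
  \<open>H_IIIA\<close>. Since \<open>H_IIIA\<close> also preserves \<open>1/x + 1/y\<close>, the exponential factors of the GIG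
  kernels of \<open>(X, Y)\<close> and \<open>(U, V)\<close> agree, while the power factors differ exactly by the Jacobian
  and the constant \<open>(\<beta>/\<alpha>)\<^sup>\<lambda>\<close>. Hence \<open>(U, V)\<close> has a product density; that it is a
  probability law fixes the normalising constants, and the product form gives independence and
  the marginals.
\<close>

lemma nn_integral_lborel_scale:
  fixes f :: "real \<Rightarrow> ennreal"
  assumes [measurable]: "f \<in> borel_measurable borel" and "c > 0"
  shows "(\<integral>\<^sup>+x. f x \<partial>lborel) = (\<integral>\<^sup>+w. f (c * w) * ennreal c \<partial>lborel)"
proof -
  have "(\<integral>\<^sup>+x. f x \<partial>lborel) = ennreal c * (\<integral>\<^sup>+w. f (0 + c * w) \<partial>lborel)"
    using nn_integral_real_affine[of f c 0] \<open>c > 0\<close> by simp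
  then show ?thesis
    by (simp add: nn_integral_cmult[symmetric] mult.commute)
qed

lemma nn_integral_quadrant_ratio:
  fixes F :: "real \<times> real \<Rightarrow> ennreal"
  assumes [measurable]: "F \<in> borel_measurable (lborel \<Otimes>\<^sub>M lborel)"
    and vanish: "\<And>x y. y \<le> 0 \<Longrightarrow> F (x, y) = 0"
  shows "integral\<^sup>N (lborel \<Otimes>\<^sub>M lborel) F = (\<integral>\<^sup>+w. \<integral>\<^sup>+y. F (y * w, y) * ennreal y \<partial>lborel \<partial>lborel)"
proof -
  have "integral\<^sup>N (lborel \<Otimes>\<^sub>M lborel) F = (\<integral>\<^sup>+y. \<integral>\<^sup>+x. F (x, y) \<partial>lborel \<partial>lborel)"
    by (rule lborel_pair.nn_integral_snd[symmetric]) simp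
  also have "\<dots> = (\<integral>\<^sup>+y. \<integral>\<^sup>+w. F (y * w, y) * ennreal y \<partial>lborel \<partial>lborel)"
  proof (rule nn_integral_cong)
    fix y :: real
    show "(\<integral>\<^sup>+x. F (x, y) \<partial>lborel) = (\<integral>\<^sup>+w. F (y * w, y) * ennreal y \<partial>lborel)"
      by (cases "y > 0") (simp_all add: nn_integral_lborel_scale[where f = "\<lambda>x. F (x, y)"] vanish)
  qed
  also have "\<dots> = (\<integral>\<^sup>+w. \<integral>\<^sup>+y. F (y * w, y) * ennreal y \<partial>lborel \<partial>lborel)"
    by (rule lborel_pair.Fubini') simp
  finally show ?thesis .
qed

text \<open>The coordinates are \<open>w = x/y\<close> and \<open>s = px + qy\<close>.\<close>

lemma nn_integral_quadrant_ratio_coords: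
  fixes F :: "real \<times> real \<Rightarrow> ennreal"
  assumes [measurable]: "F \<in> borel_measurable (lborel \<Otimes>\<^sub>M lborel)" and "p > 0" "q > 0"
    and vanish: "\<And>x y. \<not> (0 < x \<and> 0 < y) \<Longrightarrow> F (x, y) = 0"
  shows "integral\<^sup>N (lborel \<Otimes>\<^sub>M lborel) F =
    (\<integral>\<^sup>+w. indicator {0<..} w *
       (\<integral>\<^sup>+s. F (s * w / (p * w + q), s / (p * w + q)) * ennreal (s / (p * w + q)\<^sup>2) \<partial>lborel) \<partial>lborel)"
proof -
  have "(\<integral>\<^sup>+y. F (y * w, y) * ennreal y \<partial>lborel) = indicator {0<..} w *
       (\<integral>\<^sup>+s. F (s * w / (p * w + q), s / (p * w + q)) * ennreal (s / (p * w + q)\<^sup>2) \<partial>lborel)" for w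
  proof (cases "w > 0")
    case True
    define c where "c = p * w + q"
    have c: "c > 0" using True \<open>p > 0\<close> \<open>q > 0\<close> by (simp add: c_def add_pos_pos)
    have jac: "ennreal (s / c) * ennreal (1 / c) = ennreal (s / c\<^sup>2)" for s
      using c by (simp add: ennreal_mult''[symmetric] power2_eq_square)
    have "(\<integral>\<^sup>+y. F (y * w, y) * ennreal y \<partial>lborel)
        = (\<integral>\<^sup>+s. F (s / c * w, s / c) * ennreal (s / c) * ennreal (1 / c) \<partial>lborel)"
      using nn_integral_lborel_scale[of "\<lambda>y. F (y * w, y) * ennreal y" "1 / c"] c by simp
    then show ?thesis
      using True by (simp add: jac mult.assoc c_def[symmetric])
  next
    case False
    then have "F (y * w, y) * ennreal y = 0" for y
      by (cases "y > 0") (simp_all add: vanish mult_nonneg_nonpos ennreal_neg not_less)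
    with False show ?thesis by (simp del: mult_eq_0_iff)
  qed
  then show ?thesis
    using nn_integral_quadrant_ratio[of F] vanish by simp
qed

text \<open>The coordinates are \<open>w = \<beta>v/(\<alpha>u)\<close> and \<open>s = \<alpha>u + \<beta>v\<close>.\<close>

lemma nn_integral_quadrant_scaled_ratio_coords:
  fixes F :: "real \<times> real \<Rightarrow> ennreal"
  assumes [measurable]: "F \<in> borel_measurable (lborel \<Otimes>\<^sub>M lborel)" and "\<alpha> > 0" "\<beta> > 0"
    and vanish: "\<And>x y. \<not> (0 < x \<and> 0 < y) \<Longrightarrow> F (x, y) = 0"
  shows "integral\<^sup>N (lborel \<Otimes>\<^sub>M lborel) F =
    (\<integral>\<^sup>+w. indicator {0<..} w *
       (\<integral>\<^sup>+s. F (s / (\<alpha> * (1 + w)), s * w / (\<beta> * (1 + w))) * ennreal (s / (\<alpha> * \<beta> * (1 + w)\<^sup>2)) \<partial>lborel) \<partial>lborel)"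
proof -
  define c where "c = \<alpha> / \<beta>"
  have c: "c > 0" using assms by (simp add: c_def)
  define I where "I t = (\<integral>\<^sup>+s. F (s / (\<beta> * t + \<alpha>), s * t / (\<beta> * t + \<alpha>)) * ennreal (s / (\<beta> * t + \<alpha>)\<^sup>2) \<partial>lborel)" for t
  have [measurable]: "I \<in> borel_measurable borel"
    unfolding I_def by measurable
  have "integral\<^sup>N (lborel \<Otimes>\<^sub>M lborel) F = (\<integral>\<^sup>+z. F (snd z, fst z) \<partial>(lborel \<Otimes>\<^sub>M lborel))"
    unfolding lborel_pair.nn_integral_snd[symmetric, OF assms(1)]
    by (subst lborel.nn_integral_fst[symmetric]) simp_all
  also have "\<dots> = (\<integral>\<^sup>+t. indicator {0<..} t * I t \<partial>lborel)"
    unfolding I_def using assms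
    by (subst nn_integral_quadrant_ratio_coords[where p = \<beta> and q = \<alpha>]) (auto simp: vanish)
  also have "\<dots> = (\<integral>\<^sup>+w. indicator {0<..} (c * w) * I (c * w) * ennreal c \<partial>lborel)"
    using c by (rule nn_integral_lborel_scale[rotated]) measurable
  also have "\<dots> = (\<integral>\<^sup>+w. indicator {0<..} w *
       (\<integral>\<^sup>+s. F (s / (\<alpha> * (1 + w)), s * w / (\<beta> * (1 + w))) * ennreal (s / (\<alpha> * \<beta> * (1 + w)\<^sup>2)) \<partial>lborel) \<partial>lborel)"
  proof (rule nn_integral_cong)
    fix w :: real
    show "indicator {0<..} (c * w) * I (c * w) * ennreal c = indicator {0<..} w *
       (\<integral>\<^sup>+s. F (s / (\<alpha> * (1 + w)), s * w / (\<beta> * (1 + w))) * ennreal (s / (\<alpha> * \<beta> * (1 + w)\<^sup>2)) \<partial>lborel)"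
    proof (cases "w > 0")
      case True
      have d: "\<beta> * (c * w) + \<alpha> = \<alpha> * (1 + w)"
        using assms by (simp add: c_def field_simps)
      have "ennreal (s / (\<alpha> * (1 + w))\<^sup>2) * ennreal c = ennreal (s / (\<alpha> * \<beta> * (1 + w)\<^sup>2))" for s
      proof -
        have "s / (\<alpha> * (1 + w))\<^sup>2 * c = s / (\<alpha> * \<beta> * (1 + w)\<^sup>2)"
          using assms True by (simp add: c_def power_mult_distrib power2_eq_square)
        then show ?thesis
          using c by (simp add: ennreal_mult''[symmetric])
      qed
      moreover have "s * (c * w) / (\<alpha> * (1 + w)) = s * w / (\<beta> * (1 + w))" for s
        using assms by (simp add: c_def)
      ultimately show ?thesis
        using True c by (simp add: I_def d nn_integral_multc[symmetric] mult.assoc)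
    qed (use c in \<open>simp add: zero_less_mult_iff\<close>)
  qed
  finally show ?thesis .
qed

lemma product_density_normalization:
  fixes f g :: "real \<Rightarrow> real"
  assumes [measurable]: "f \<in> borel_measurable borel" "g \<in> borel_measurable borel"
    and nonneg: "\<And>x. f x \<ge> 0" "\<And>x. g x \<ge> 0" and "K > 0"
    and "prob_space (density (lborel \<Otimes>\<^sub>M lborel) (\<lambda>(x, y). ennreal (K * f x * g y)))"
  shows "integrable lborel f" "integrable lborel g" "integral\<^sup>L lborel f > 0" "integral\<^sup>L lborel g > 0"
    "K * integral\<^sup>L lborel f * integral\<^sup>L lborel g = 1"
proof -
  interpret P: prob_space "density (lborel \<Otimes>\<^sub>M lborel) (\<lambda>(x, y). ennreal (K * f x * g y))" by fact
  let ?If = "\<integral>\<^sup>+x. ennreal (f x) \<partial>lborel" and ?Ig = "\<integral>\<^sup>+x. ennreal (g x) \<partial>lborel"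
  have "1 = (\<integral>\<^sup>+z. ennreal (K * f (fst z) * g (snd z)) \<partial>(lborel \<Otimes>\<^sub>M lborel))"
    using P.emeasure_space_1 sets.top[of "lborel \<Otimes>\<^sub>M lborel"]
    by (subst (asm) emeasure_density) (simp_all add: split_beta')
  also have "\<dots> = (\<integral>\<^sup>+x. \<integral>\<^sup>+y. ennreal K * ennreal (f x) * ennreal (g y) \<partial>lborel \<partial>lborel)"
    using \<open>K > 0\<close> nonneg by (subst lborel.nn_integral_fst[symmetric]) (simp_all add: ennreal_mult)
  also have "\<dots> = ennreal K * ?If * ?Ig"
    by (simp add: nn_integral_cmult nn_integral_multc)
  finally have norm: "ennreal K * ?If * ?Ig = 1" ..
  then have nonzero: "?If \<noteq> 0" "?Ig \<noteq> 0"
    by auto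
  with norm \<open>K > 0\<close> have finite: "?If \<noteq> \<top>" "?Ig \<noteq> \<top>"
    by (auto simp: ennreal_mult_eq_top_iff)
  show f_int: "integrable lborel f" and g_int: "integrable lborel g"
    using finite nonneg by (auto intro: integrableI_nonneg simp: top.not_eq_extremum)
  have "?If = ennreal (integral\<^sup>L lborel f)" "?Ig = ennreal (integral\<^sup>L lborel g)"
    using f_int g_int nonneg by (simp_all add: nn_integral_eq_integral)
  moreover have "integral\<^sup>L lborel f \<ge> 0" "integral\<^sup>L lborel g \<ge> 0"
    using nonneg by simp_all
  ultimately show "integral\<^sup>L lborel f > 0" "integral\<^sup>L lborel g > 0"
    "K * integral\<^sup>L lborel f * integral\<^sup>L lborel g = 1"
    using norm nonzero \<open>K > 0\<close> by (auto simp: less_le ennreal_mult[symmetric])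
qed

lemma (in prob_space) indep_var_if_product_density:
  assumes S: "sigma_finite_measure S" and T: "sigma_finite_measure T"
    and joint: "distributed M (S \<Otimes>\<^sub>M T) (\<lambda>\<omega>. (X \<omega>, Y \<omega>)) (\<lambda>(x, y). f x * g y)"
    and [measurable]: "f \<in> borel_measurable S" "g \<in> borel_measurable T"
    and f: "prob_space (density S f)" and g: "prob_space (density T g)"
  shows "indep_var S X T Y \<and> distributed M S X f \<and> distributed M T Y g"
proof -
  have "(\<integral>\<^sup>+x. f x \<partial>S) = 1" "(\<integral>\<^sup>+y. g y \<partial>T) = 1"
    using prob_space.emeasure_space_1[OF f] prob_space.emeasure_space_1[OF g]
    by (simp_all add: emeasure_density)
  then have X: "distributed M S X f" and Y: "distributed M T Y g"
    using distr_marginal1[OF S T joint] distr_marginal2[OF S T joint]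
    by (simp_all add: nn_integral_cmult nn_integral_multc)
  have "distr M S X \<Otimes>\<^sub>M distr M T Y = density S f \<Otimes>\<^sub>M density T g"
    using X Y by (simp add: distributed_distr_eq_density)
  also have "\<dots> = distr M (S \<Otimes>\<^sub>M T) (\<lambda>\<omega>. (X \<omega>, Y \<omega>))"
    using T g by (simp add: pair_measure_density prob_space_imp_sigma_finite distributed_distr_eq_density[OF joint])
  finally have "indep_var S X T Y"
    using X Y by (simp add: indep_var_distribution_eq distributed_measurable)
  with X Y show ?thesis by simp
qed

lemma (in prob_space) indep_var_lborel_iff_borel:
  "indep_var lborel X lborel Y \<longleftrightarrow> indep_var borel X borel Y"
  unfolding indep_var_def indep_vars_def by (simp add: case_bool_if cong: if_cong)

definition H_IIIA_jacobian :: "real \<Rightarrow> real \<Rightarrow> real \<times> real \<Rightarrow> real" where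
  "H_IIIA_jacobian \<alpha> \<beta> = (\<lambda>(x, y). (\<alpha> * x + \<beta> * y)\<^sup>2 / (\<alpha> * \<beta> * (x + y)\<^sup>2))"

lemma ratio_coords_sums:
  fixes p q s w :: real
  assumes "p * w + q \<noteq> 0"
  shows "p * (s * w / (p * w + q)) + q * (s / (p * w + q)) = s"
    and "s * w / (p * w + q) + s / (p * w + q) = s * (1 + w) / (p * w + q)"
proof -
  have "p * (s * w / (p * w + q)) + q * (s / (p * w + q)) = s * (p * w + q) / (p * w + q)"
    by (simp add: add_divide_distrib algebra_simps)
  then show "p * (s * w / (p * w + q)) + q * (s / (p * w + q)) = s"
    using assms by simp
  show "s * w / (p * w + q) + s / (p * w + q) = s * (1 + w) / (p * w + q)"
    by (simp add: add_divide_distrib algebra_simps)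
qed

lemma H_IIIA_ratio_coords:
  assumes "\<alpha> > 0" "\<beta> > 0" "s > 0" "w > 0"
  shows "H_IIIA \<alpha> \<beta> (s * w / (\<alpha> * w + \<beta>), s / (\<alpha> * w + \<beta>)) = (s / (\<alpha> * (1 + w)), s * w / (\<beta> * (1 + w)))"
proof -
  define c where "c = \<alpha> * w + \<beta>"
  define d where "d = 1 + w"
  have "c > 0" "d > 0" using assms by (simp_all add: c_def d_def add_pos_pos)
  note sums = ratio_coords_sums[of \<alpha> w \<beta> s, folded c_def d_def]
  show ?thesis
    unfolding H_IIIA_def case_prod_conv c_def[symmetric] d_def[symmetric] sums[OF \<open>c > 0\<close>[THEN less_imp_neq, symmetric]]
    using \<open>c > 0\<close> \<open>d > 0\<close> assms by (simp add: field_simps)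
qed

lemma H_IIIA_jacobian_ratio_coords:
  assumes "\<alpha> > 0" "\<beta> > 0" "s > 0" "w > 0"
  shows "H_IIIA_jacobian \<alpha> \<beta> (s * w / (\<alpha> * w + \<beta>), s / (\<alpha> * w + \<beta>)) * (s / (\<alpha> * w + \<beta>)\<^sup>2)
    = s / (\<alpha> * \<beta> * (1 + w)\<^sup>2)"
proof -
  define c where "c = \<alpha> * w + \<beta>"
  define d where "d = 1 + w"
  have "c > 0" "d > 0" using assms by (simp_all add: c_def d_def add_pos_pos)
  note sums = ratio_coords_sums[of \<alpha> w \<beta> s, folded c_def d_def]
  show ?thesis
    unfolding H_IIIA_jacobian_def case_prod_conv c_def[symmetric] d_def[symmetric] sums[OF \<open>c > 0\<close>[THEN less_imp_neq, symmetric]]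
    using \<open>c > 0\<close> \<open>d > 0\<close> assms by (simp add: field_simps power2_eq_square)
qed

lemma H_IIIA_eq_scaled_swap:
  "H_IIIA \<alpha> \<beta> (x, y) = (y * r / \<alpha>, x * r / \<beta>)" if "r = (\<alpha> * x + \<beta> * y) / (x + y)"
  using that by (simp add: H_IIIA_def)

lemma H_IIIA_pos_imp_pos:
  assumes "\<alpha> > 0" "\<beta> > 0" "0 < fst (H_IIIA \<alpha> \<beta> (x, y))" "0 < snd (H_IIIA \<alpha> \<beta> (x, y))"
  shows "0 < x \<and> 0 < y"
proof -
  define r where "r = (\<alpha> * x + \<beta> * y) / (x + y)"
  have "H_IIIA \<alpha> \<beta> (x, y) = (y * r / \<alpha>, x * r / \<beta>)"
    using r_def by (rule H_IIIA_eq_scaled_swap)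
  then have yr: "0 < y * r" and xr: "0 < x * r"
    using assms by (simp_all add: zero_less_divide_iff)
  then have "0 < x * y"
    by (auto simp: zero_less_mult_iff)
  show ?thesis
  proof (rule ccontr)
    assume "\<not> (0 < x \<and> 0 < y)"
    with \<open>0 < x * y\<close> have "x < 0" "y < 0"
      by (auto simp: zero_less_mult_iff)
    then have "0 < r"
      using assms by (simp add: r_def divide_neg_neg add_neg_neg mult_pos_neg)
    with yr \<open>y < 0\<close> show False
      by (simp add: zero_less_mult_iff)
  qed
qed

lemma measurable_H_IIIA [measurable]:
  "H_IIIA \<alpha> \<beta> \<in> lborel \<Otimes>\<^sub>M lborel \<rightarrow>\<^sub>M lborel \<Otimes>\<^sub>M lborel"
  unfolding H_IIIA_def by measurable

lemma measurable_H_IIIA_jacobian [measurable]: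
  "H_IIIA_jacobian \<alpha> \<beta> \<in> borel_measurable (lborel \<Otimes>\<^sub>M lborel)"
  unfolding H_IIIA_jacobian_def by measurable

lemma H_IIIA_jacobian_nonneg: "\<alpha> > 0 \<Longrightarrow> \<beta> > 0 \<Longrightarrow> H_IIIA_jacobian \<alpha> \<beta> z \<ge> 0"
  by (cases z) (simp add: H_IIIA_jacobian_def)

lemma nn_integral_H_IIIA_change_vars:
  fixes F :: "real \<times> real \<Rightarrow> ennreal"
  assumes [measurable]: "F \<in> borel_measurable (lborel \<Otimes>\<^sub>M lborel)" and ab: "\<alpha> > 0" "\<beta> > 0"
    and vanish: "\<And>x y. \<not> (0 < x \<and> 0 < y) \<Longrightarrow> F (x, y) = 0"
  shows "integral\<^sup>N (lborel \<Otimes>\<^sub>M lborel) F =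
    (\<integral>\<^sup>+z. F (H_IIIA \<alpha> \<beta> z) * ennreal (H_IIIA_jacobian \<alpha> \<beta> z) \<partial>(lborel \<Otimes>\<^sub>M lborel))"
proof -
  let ?G = "\<lambda>z. F (H_IIIA \<alpha> \<beta> z) * ennreal (H_IIIA_jacobian \<alpha> \<beta> z)"
  have G_vanish: "?G (x, y) = 0" if "\<not> (0 < x \<and> 0 < y)" for x y
    using that H_IIIA_pos_imp_pos[OF ab, of x y] vanish
    by (cases "H_IIIA \<alpha> \<beta> (x, y)") auto
  have integrand_eq: "?G (s * w / (\<alpha> * w + \<beta>), s / (\<alpha> * w + \<beta>)) * ennreal (s / (\<alpha> * w + \<beta>)\<^sup>2)
      = F (s / (\<alpha> * (1 + w)), s * w / (\<beta> * (1 + w))) * ennreal (s / (\<alpha> * \<beta> * (1 + w)\<^sup>2))"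
    if "w > 0" for w s
  proof (cases "s > 0")
    case True
    have J_nonneg: "0 \<le> s / (\<alpha> * w + \<beta>)\<^sup>2"
      using True by simp
    have "ennreal (H_IIIA_jacobian \<alpha> \<beta> (s * w / (\<alpha> * w + \<beta>), s / (\<alpha> * w + \<beta>))) * ennreal (s / (\<alpha> * w + \<beta>)\<^sup>2)
        = ennreal (s / (\<alpha> * \<beta> * (1 + w)\<^sup>2))"
      unfolding ennreal_mult''[OF J_nonneg, symmetric] H_IIIA_jacobian_ratio_coords[OF ab True that] ..
    then show ?thesis
      using True that ab by (simp add: H_IIIA_ratio_coords mult.assoc)
  next
    case False
    then have "s / (\<alpha> * w + \<beta>)\<^sup>2 \<le> 0" "s / (\<alpha> * \<beta> * (1 + w)\<^sup>2) \<le> 0"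
      using ab by (simp_all add: divide_nonpos_nonneg)
    then show ?thesis
      by (simp add: ennreal_neg)
  qed
  have "integral\<^sup>N (lborel \<Otimes>\<^sub>M lborel) F =
    (\<integral>\<^sup>+w. indicator {0<..} w *
       (\<integral>\<^sup>+s. F (s / (\<alpha> * (1 + w)), s * w / (\<beta> * (1 + w))) * ennreal (s / (\<alpha> * \<beta> * (1 + w)\<^sup>2)) \<partial>lborel) \<partial>lborel)"
    by (rule nn_integral_quadrant_scaled_ratio_coords[OF assms])
  also have "\<dots> =
      (\<integral>\<^sup>+w. indicator {0<..} w * (\<integral>\<^sup>+s. ?G (s * w / (\<alpha> * w + \<beta>), s / (\<alpha> * w + \<beta>)) *
        ennreal (s / (\<alpha> * w + \<beta>)\<^sup>2) \<partial>lborel) \<partial>lborel)"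
    by (intro nn_integral_cong) (auto simp: integrand_eq split: split_indicator)
  also have "\<dots> = integral\<^sup>N (lborel \<Otimes>\<^sub>M lborel) ?G"
    using G_vanish by (intro nn_integral_quadrant_ratio_coords[symmetric] ab) measurable
  finally show ?thesis .
qed

lemma distr_H_IIIA_density:
  fixes g :: "real \<times> real \<Rightarrow> ennreal"
  assumes [measurable]: "g \<in> borel_measurable (lborel \<Otimes>\<^sub>M lborel)" and ab: "\<alpha> > 0" "\<beta> > 0"
    and vanish: "\<And>x y. \<not> (0 < x \<and> 0 < y) \<Longrightarrow> g (x, y) = 0"
  shows "distr (density (lborel \<Otimes>\<^sub>M lborel) (\<lambda>z. g (H_IIIA \<alpha> \<beta> z) * ennreal (H_IIIA_jacobian \<alpha> \<beta> z)))
      (lborel \<Otimes>\<^sub>M lborel) (H_IIIA \<alpha> \<beta>) = density (lborel \<Otimes>\<^sub>M lborel) g"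
proof (rule measure_eqI)
  fix A assume "A \<in> sets (distr (density (lborel \<Otimes>\<^sub>M lborel) (\<lambda>z. g (H_IIIA \<alpha> \<beta> z) * ennreal (H_IIIA_jacobian \<alpha> \<beta> z)))
      (lborel \<Otimes>\<^sub>M lborel) (H_IIIA \<alpha> \<beta>))"
  then have A [measurable]: "A \<in> sets (lborel \<Otimes>\<^sub>M lborel)" by simp
  let ?N = "lborel \<Otimes>\<^sub>M lborel" and ?H = "H_IIIA \<alpha> \<beta>"
  let ?p = "\<lambda>z. g (?H z) * ennreal (H_IIIA_jacobian \<alpha> \<beta> z)"
  have "emeasure (distr (density ?N ?p) ?N ?H) A = emeasure (density ?N ?p) (?H -` A \<inter> space ?N)"
    using A by (subst emeasure_distr) simp_all
  also have "\<dots> = (\<integral>\<^sup>+z. indicator A (?H z) * g (?H z) * ennreal (H_IIIA_jacobian \<alpha> \<beta> z) \<partial>?N)"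
    using measurable_sets[OF measurable_H_IIIA A]
    by (subst emeasure_density) (auto intro!: nn_integral_cong split: split_indicator simp: space_pair_measure)
  also have "\<dots> = (\<integral>\<^sup>+z. indicator A z * g z \<partial>?N)"
    using vanish by (intro nn_integral_H_IIIA_change_vars[symmetric] ab) simp_all
  also have "\<dots> = emeasure (density ?N g) A"
    using A by (subst emeasure_density) (simp_all add: mult.commute)
  finally show "emeasure (distr (density ?N ?p) ?N ?H) A = emeasure (density ?N g) A" .
qed simp

lemma gig_kernel_nonneg: "gig_kernel lam a b p q x \<ge> 0"
  by (simp add: gig_kernel_def)

lemma gig_kernel_eq_0: "x \<le> 0 \<Longrightarrow> gig_kernel lam a b p q x = 0"
  by (simp add: gig_kernel_def)

lemma measurable_gig_kernel [measurable]: "gig_kernel lam a b p q \<in> borel_measurable borel"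
  unfolding gig_kernel_def by measurable

lemma gig_kernel_H_IIIA:
  assumes ab: "\<alpha> > 0" "\<beta> > 0" and xy: "x > 0" "y > 0"
  shows "gig_kernel lam a b \<alpha> 1 x * gig_kernel (- lam) a b \<beta> 1 y =
    (\<beta> / \<alpha>) powr lam * gig_kernel (- lam) a b \<alpha> 1 (fst (H_IIIA \<alpha> \<beta> (x, y)))
      * gig_kernel lam a b \<beta> 1 (snd (H_IIIA \<alpha> \<beta> (x, y))) * H_IIIA_jacobian \<alpha> \<beta> (x, y)"
proof -
  define r where "r = (\<alpha> * x + \<beta> * y) / (x + y)"
  define u where "u = y * r / \<alpha>"
  define v where "v = x * r / \<beta>"
  have r: "r > 0" using assms by (simp add: r_def add_pos_pos)
  have uv: "u > 0" "v > 0" using assms r by (simp_all add: u_def v_def)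
  have H: "H_IIIA \<alpha> \<beta> (x, y) = (u, v)"
    by (simp add: H_IIIA_eq_scaled_swap[OF r_def] u_def v_def)
  have jac: "H_IIIA_jacobian \<alpha> \<beta> (x, y) = r\<^sup>2 / (\<alpha> * \<beta>)"
    by (simp add: H_IIIA_jacobian_def r_def power_divide)
  have rs: "r * (x + y) = \<alpha> * x + \<beta> * y"
    using xy by (simp add: r_def)
  have linear: "\<alpha> * u + \<beta> * v = \<alpha> * x + \<beta> * y"
    using ab by (simp add: u_def v_def rs[symmetric] algebra_simps)
  have "1 / u + 1 / v = r * (x + y) / (x * y * r)"
    using assms r by (simp add: u_def v_def rs field_simps)
  also have "\<dots> = 1 / x + 1 / y"
    using xy r by (simp add: field_simps)
  finally have reciprocal: "1 / u + 1 / v = 1 / x + 1 / y" .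
  have exponent: "- a * \<alpha> * x - b / x + (- a * \<beta> * y - b / y) = - a * \<alpha> * u - b / u + (- a * \<beta> * v - b / v)"
  proof -
    have "- a * \<alpha> * x - b / x + (- a * \<beta> * y - b / y) = - a * (\<alpha> * x + \<beta> * y) - b * (1 / x + 1 / y)"
      by (simp add: algebra_simps)
    also have "\<dots> = - a * \<alpha> * u - b / u + (- a * \<beta> * v - b / v)"
      unfolding linear[symmetric] reciprocal[symmetric] by (simp add: algebra_simps)
    finally show ?thesis .
  qed
  have power: "x powr (lam - 1) * y powr (- lam - 1) =
      (\<beta> / \<alpha>) powr lam * u powr (- lam - 1) * v powr (lam - 1) * (r\<^sup>2 / (\<alpha> * \<beta>))"
    using assms r by (simp add: u_def v_def powr_mult powr_divide powr_diff powr_add powr_minus field_simps power2_eq_square)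
  have "gig_kernel lam a b \<alpha> 1 x * gig_kernel (- lam) a b \<beta> 1 y
      = x powr (lam - 1) * y powr (- lam - 1) * exp (- a * \<alpha> * x - b / x + (- a * \<beta> * y - b / y))"
    using xy by (simp add: gig_kernel_def exp_add)
  also have "\<dots> = (\<beta> / \<alpha>) powr lam * u powr (- lam - 1) * v powr (lam - 1) * (r\<^sup>2 / (\<alpha> * \<beta>))
      * exp (- a * \<alpha> * u - b / u + (- a * \<beta> * v - b / v))"
    unfolding power exponent ..
  also have "\<dots> = (\<beta> / \<alpha>) powr lam * gig_kernel (- lam) a b \<alpha> 1 u * gig_kernel lam a b \<beta> 1 v * (r\<^sup>2 / (\<alpha> * \<beta>))"
    using uv by (simp add: gig_kernel_def exp_add)
  finally show ?thesis
    unfolding H jac fst_conv snd_conv .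
qed

lemma distr_H_IIIA_gig_kernels:
  assumes ab: "\<alpha> > 0" "\<beta> > 0" and "c \<ge> 0"
  shows "distr (density (lborel \<Otimes>\<^sub>M lborel)
        (\<lambda>(x, y). ennreal (c * gig_kernel lam a b \<alpha> 1 x * gig_kernel (- lam) a b \<beta> 1 y)))
      (lborel \<Otimes>\<^sub>M lborel) (H_IIIA \<alpha> \<beta>) =
    density (lborel \<Otimes>\<^sub>M lborel)
      (\<lambda>(u, v). ennreal (c * (\<beta> / \<alpha>) powr lam * gig_kernel (- lam) a b \<alpha> 1 u * gig_kernel lam a b \<beta> 1 v))"
proof -
  let ?q = "\<lambda>(u, v). ennreal (c * (\<beta> / \<alpha>) powr lam * gig_kernel (- lam) a b \<alpha> 1 u * gig_kernel lam a b \<beta> 1 v)"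
  have q_vanish: "?q (u, v) = 0" if "\<not> (0 < u \<and> 0 < v)" for u v
    using that by (auto simp: gig_kernel_eq_0 not_less)
  have "ennreal (c * gig_kernel lam a b \<alpha> 1 x * gig_kernel (- lam) a b \<beta> 1 y)
      = ?q (H_IIIA \<alpha> \<beta> (x, y)) * ennreal (H_IIIA_jacobian \<alpha> \<beta> (x, y))" for x y
  proof (cases "0 < x \<and> 0 < y")
    case True
    then show ?thesis
      using gig_kernel_H_IIIA[OF ab, of x y lam a b] \<open>c \<ge> 0\<close> ab
      by (cases "H_IIIA \<alpha> \<beta> (x, y)")
        (simp add: ennreal_mult[symmetric] gig_kernel_nonneg H_IIIA_jacobian_nonneg mult_ac)
  next
    case False
    then have "?q (H_IIIA \<alpha> \<beta> (x, y)) = 0"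
      using H_IIIA_pos_imp_pos[OF ab, of x y] q_vanish
      by (cases "H_IIIA \<alpha> \<beta> (x, y)") auto
    with False show ?thesis
      by (auto simp: gig_kernel_eq_0 not_less)
  qed
  then have "(\<lambda>(x, y). ennreal (c * gig_kernel lam a b \<alpha> 1 x * gig_kernel (- lam) a b \<beta> 1 y))
      = (\<lambda>z. ?q (H_IIIA \<alpha> \<beta> z) * ennreal (H_IIIA_jacobian \<alpha> \<beta> z))"
    by auto
  then show ?thesis
    using q_vanish by (simp only:) (intro distr_H_IIIA_density ab, simp_all)
qed

lemma measurable_gig_density [measurable]: "gig_density lam a b p q \<in> borel_measurable borel"
  unfolding gig_density_def by measurable

lemma gig_density_product:
  assumes "gig_const l1 a b p1 q1 > 0" "gig_const l2 a b p2 q2 > 0"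
  shows "gig_density l1 a b p1 q1 x * gig_density l2 a b p2 q2 y =
    ennreal (1 / (gig_const l1 a b p1 q1 * gig_const l2 a b p2 q2) * gig_kernel l1 a b p1 q1 x * gig_kernel l2 a b p2 q2 y)"
  using assms by (simp add: gig_density_def ennreal_mult[symmetric] gig_kernel_nonneg)

lemma gig_const_pos:
  assumes "prob_space M" and "distributed M lborel X (gig_density lam a b p q)"
  shows "gig_const lam a b p q > 0"
proof (rule ccontr)
  assume "\<not> gig_const lam a b p q > 0"
  then have "gig_density lam a b p q = (\<lambda>_. 0)"
    by (auto simp: gig_density_def ennreal_neg divide_nonneg_nonpos gig_kernel_nonneg)
  then have "distr M lborel X = density lborel (\<lambda>_. 0)"
    using assms(2) by (simp add: distributed_distr_eq_density)
  moreover have "prob_space (distr M lborel X)"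
    using assms by (intro prob_space.prob_space_distr) (auto dest: distributed_measurable)
  ultimately show False
    by (simp add: prob_space_def prob_space_axioms_def emeasure_density)
qed

lemma prob_space_gig_density:
  assumes "gig_const lam a b p q > 0" "integrable lborel (gig_kernel lam a b p q)"
  shows "prob_space (density lborel (gig_density lam a b p q))"
proof (rule prob_spaceI)
  have "(\<integral>\<^sup>+x. gig_density lam a b p q x \<partial>lborel) = ennreal (\<integral>x. gig_kernel lam a b p q x / gig_const lam a b p q \<partial>lborel)"
    unfolding gig_density_def using assms by (intro nn_integral_eq_integral) (simp_all add: gig_kernel_nonneg)
  also have "\<dots> = 1"
    using assms(1) by (simp add: gig_const_def[symmetric])
  finally show "emeasure (density lborel (gig_density lam a b p q)) (space (density lborel (gig_density lam a b p q))) = 1"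
    by (simp add: emeasure_density)
qed

lemma (in prob_space) distributed_H_IIIA_gig:
  assumes ab: "\<alpha> > 0" "\<beta> > 0"
    and C1: "gig_const lam a b \<alpha> 1 > 0" and C2: "gig_const (- lam) a b \<beta> 1 > 0"
    and joint: "distributed M (lborel \<Otimes>\<^sub>M lborel) Z
      (\<lambda>(x, y). gig_density lam a b \<alpha> 1 x * gig_density (- lam) a b \<beta> 1 y)"
  shows "distributed M (lborel \<Otimes>\<^sub>M lborel) (\<lambda>\<omega>. H_IIIA \<alpha> \<beta> (Z \<omega>))
      (\<lambda>(u, v). gig_density (- lam) a b \<alpha> 1 u * gig_density lam a b \<beta> 1 v)"
    and "prob_space (density lborel (gig_density (- lam) a b \<alpha> 1))"
    and "prob_space (density lborel (gig_density lam a b \<beta> 1))"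
proof -
  define c where "c = 1 / (gig_const lam a b \<alpha> 1 * gig_const (- lam) a b \<beta> 1)"
  define K where "K = c * (\<beta> / \<alpha>) powr lam"
  have "c > 0" "K > 0" using C1 C2 ab by (simp_all add: c_def K_def)
  let ?q = "\<lambda>(u, v). ennreal (K * gig_kernel (- lam) a b \<alpha> 1 u * gig_kernel lam a b \<beta> 1 v)"
  have joint_eq: "(\<lambda>(x, y). gig_density lam a b \<alpha> 1 x * gig_density (- lam) a b \<beta> 1 y)
      = (\<lambda>(x, y). ennreal (c * gig_kernel lam a b \<alpha> 1 x * gig_kernel (- lam) a b \<beta> 1 y))"
    unfolding c_def gig_density_product[OF C1 C2] ..
  have [measurable]: "Z \<in> M \<rightarrow>\<^sub>M lborel \<Otimes>\<^sub>M lborel"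
    using joint by (rule distributed_measurable)
  have "distr M (lborel \<Otimes>\<^sub>M lborel) (\<lambda>\<omega>. H_IIIA \<alpha> \<beta> (Z \<omega>))
      = distr (distr M (lborel \<Otimes>\<^sub>M lborel) Z) (lborel \<Otimes>\<^sub>M lborel) (H_IIIA \<alpha> \<beta>)"
    by (simp add: distr_distr comp_def)
  also have "\<dots> = density (lborel \<Otimes>\<^sub>M lborel) ?q"
    unfolding distributed_distr_eq_density[OF joint] joint_eq K_def
    using \<open>c > 0\<close> by (intro distr_H_IIIA_gig_kernels ab) simp
  finally have distr_eq: "distr M (lborel \<Otimes>\<^sub>M lborel) (\<lambda>\<omega>. H_IIIA \<alpha> \<beta> (Z \<omega>)) = density (lborel \<Otimes>\<^sub>M lborel) ?q" .
  have "prob_space (density (lborel \<Otimes>\<^sub>M lborel) ?q)"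
    unfolding distr_eq[symmetric] by (rule prob_space_distr) measurable
  \<comment> \<open>The image law is a probability measure, so the image kernels are integrable with positive
    integrals, and these integrals are the normalising constants of the image densities.\<close>
  note norm = product_density_normalization[OF measurable_gig_kernel measurable_gig_kernel
      gig_kernel_nonneg gig_kernel_nonneg \<open>K > 0\<close> this, folded gig_const_def]
  show "prob_space (density lborel (gig_density (- lam) a b \<alpha> 1))"
    "prob_space (density lborel (gig_density lam a b \<beta> 1))"
    using norm by (simp_all add: prob_space_gig_density)
  have "K = 1 / (gig_const (- lam) a b \<alpha> 1 * gig_const lam a b \<beta> 1)"
    using norm by (simp add: field_simps)
  then have "?q = (\<lambda>(u, v). gig_density (- lam) a b \<alpha> 1 u * gig_density lam a b \<beta> 1 v)"
    unfolding gig_density_product[OF norm(3,4)] by simp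
  then show "distributed M (lborel \<Otimes>\<^sub>M lborel) (\<lambda>\<omega>. H_IIIA \<alpha> \<beta> (Z \<omega>))
      (\<lambda>(u, v). gig_density (- lam) a b \<alpha> 1 u * gig_density lam a b \<beta> 1 v)"
    using distr_eq by (simp add: distributed_def)
qed

theorem theorem1p1:
  fixes M :: "'w measure" and X Y :: "'w \<Rightarrow> real"
    and \<alpha> \<beta> lam a b :: real
  assumes "prob_space M"
    and "\<alpha> > 0" and "\<beta> > 0" and "a > 0" and "b > 0"
    and "prob_space.indep_var M borel X borel Y"
    and "distributed M lborel X (gig_density lam a b \<alpha> 1)"
    and "distributed M lborel Y (gig_density (- lam) a b \<beta> 1)"
  shows "prob_space.indep_var M
           borel (\<lambda>\<omega>. fst (H_IIIA \<alpha> \<beta> (X \<omega>, Y \<omega>)))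
           borel (\<lambda>\<omega>. snd (H_IIIA \<alpha> \<beta> (X \<omega>, Y \<omega>)))
       \<and> distributed M lborel (\<lambda>\<omega>. fst (H_IIIA \<alpha> \<beta> (X \<omega>, Y \<omega>))) (gig_density (- lam) a b \<alpha> 1)
       \<and> distributed M lborel (\<lambda>\<omega>. snd (H_IIIA \<alpha> \<beta> (X \<omega>, Y \<omega>))) (gig_density lam a b \<beta> 1)"
proof -
  interpret prob_space M by fact
  have C1: "gig_const lam a b \<alpha> 1 > 0" and C2: "gig_const (- lam) a b \<beta> 1 > 0"
    using assms(1,7,8) by (simp_all add: gig_const_pos)
  have "indep_var lborel X lborel Y"
    using assms(6) by (simp add: indep_var_lborel_iff_borel)
  then have "distributed M (lborel \<Otimes>\<^sub>M lborel) (\<lambda>\<omega>. (X \<omega>, Y \<omega>))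
      (\<lambda>(x, y). gig_density lam a b \<alpha> 1 x * gig_density (- lam) a b \<beta> 1 y)"
    using assms(7,8) by (intro distributed_joint_indep sigma_finite_lborel)
  note image = distributed_H_IIIA_gig[OF assms(2,3) C1 C2 this]
  have "indep_var lborel (\<lambda>\<omega>. fst (H_IIIA \<alpha> \<beta> (X \<omega>, Y \<omega>))) lborel (\<lambda>\<omega>. snd (H_IIIA \<alpha> \<beta> (X \<omega>, Y \<omega>)))
      \<and> distributed M lborel (\<lambda>\<omega>. fst (H_IIIA \<alpha> \<beta> (X \<omega>, Y \<omega>))) (gig_density (- lam) a b \<alpha> 1)
      \<and> distributed M lborel (\<lambda>\<omega>. snd (H_IIIA \<alpha> \<beta> (X \<omega>, Y \<omega>))) (gig_density lam a b \<beta> 1)"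
    using image by (intro indep_var_if_product_density sigma_finite_lborel) simp_all
  then show ?thesis
    by (simp add: indep_var_lborel_iff_borel)
qed

end
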